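(* Let $X_1,X_2,\dots,X_n$ be independent nonnegative random variables and set $S_n=X_1+\dots+X_n$. For $L\ge0$ such that $\mathbb{P}(S_n\le L)>0$ and any $\delta,\delta'$ with $0<\delta'\le\delta$, \[\mathbb{P}(X_1\ge\delta\mid S_n\le L)\le\frac{L}{\mathbb{P}(X_1\le\delta-\delta')\sum_{k=2}^n\mathbb{E}\big[X_k\mathbf{1}_{\{X_k\le\delta'\}}\big]}.\] *)

theory Defs
  imports "HOL-Probability.Probability"
begin

end

theory Submission
  imports Defs
begin

text \<open>Fix \<open>k \<ge> 2\<close> and let \<open>R\<^sub>k\<close> be the sum of the \<open>X\<^sub>j\<close> with \<open>j \<notin> {1, k}\<close>. As \<open>X\<^sub>1\<close>, \<open>X\<^sub>k\<close> and \<open>R\<^sub>k\<close>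
  are independent, \<open>P(X\<^sub>1 \<le> \<delta> - \<delta>') E[X\<^sub>k 1{X\<^sub>k \<le> \<delta>'}] P(R\<^sub>k \<le> L - \<delta>)\<close> is the expectation of
  \<open>X\<^sub>k\<close> times the indicator of an event on which \<open>S\<^sub>n \<le> L\<close>, so it is at most \<open>E[X\<^sub>k 1{S\<^sub>n \<le> L}]\<close>;
  moreover \<open>{X\<^sub>1 \<ge> \<delta>, S\<^sub>n \<le> L} \<subseteq> {R\<^sub>k \<le> L - \<delta>}\<close>. Summing over \<open>k\<close> and using
  \<open>X\<^sub>2 + \<dots> + X\<^sub>n \<le> S\<^sub>n \<le> L\<close> on \<open>{S\<^sub>n \<le> L}\<close> bounds
  \<open>P(X\<^sub>1 \<ge> \<delta>, S\<^sub>n \<le> L) P(X\<^sub>1 \<le> \<delta> - \<delta>') \<Sum>\<^sub>k E[X\<^sub>k 1{X\<^sub>k \<le> \<delta>'}]\<close> by \<open>L P(S\<^sub>n \<le> L)\<close>.\<close>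

lemma (in prob_space) expectation_indicator_atMost:
  "(\<integral>\<omega>. indicator {..a} (f \<omega>) \<partial>M) = prob {\<omega>\<in>space M. f \<omega> \<le> a}"
proof -
  have "(\<integral>\<omega>. indicator {..a} (f \<omega>) \<partial>M) = (\<integral>\<omega>. indicator {\<omega>\<in>space M. f \<omega> \<le> a} \<omega> \<partial>M)"
    by (rule Bochner_Integration.integral_cong) (auto simp: indicator_def)
  also have "\<dots> = prob {\<omega>\<in>space M. f \<omega> \<le> a}"
    by (simp add: Int_absorb2 subset_eq)
  finally show ?thesis .
qed

lemma (in prob_space) indep_vars_sum_blocks:
  fixes X :: "'i \<Rightarrow> 'a \<Rightarrow> real"
  assumes "indep_vars (\<lambda>_. borel) X I" "\<And>j. j \<in> J \<Longrightarrow> K j \<subseteq> I" "disjoint_family_on K J"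
  shows "indep_vars (\<lambda>_. borel) (\<lambda>j \<omega>. \<Sum>i\<in>K j. X i \<omega>) J"
proof -
  have "indep_vars (\<lambda>_. borel) (\<lambda>j \<omega>. \<Sum>i\<in>K j. restrict (\<lambda>i. X i \<omega>) (K j) i) J"
    by (rule indep_vars_compose2[OF indep_vars_restrict[OF assms]]) measurable
  then show ?thesis
    by simp
qed

lemma integrable_mult_indicator_sublevel:
  fixes f g :: "'a \<Rightarrow> real"
  assumes [measurable]: "f \<in> borel_measurable M" "g \<in> borel_measurable M" and "finite_measure M"
    and "\<And>\<omega>. \<omega> \<in> space M \<Longrightarrow> 0 \<le> f \<omega> \<and> f \<omega> \<le> g \<omega>"
  shows "integrable M (\<lambda>\<omega>. f \<omega> * indicator {..L} (g \<omega>))"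
proof -
  interpret finite_measure M by fact
  show ?thesis
  proof (rule integrable_const_bound[where B = "max 0 L"])
    show "AE \<omega> in M. norm (f \<omega> * indicator {..L} (g \<omega>)) \<le> max 0 L"
      using assms(4) by (intro AE_I2) (force simp: indicator_def)
  qed simp
qed

lemma (in prob_space) prob_mult_truncated_expectation_le:
  fixes Y :: "'i \<Rightarrow> 'a \<Rightarrow> real"
  assumes indep: "indep_vars (\<lambda>_. borel) Y {i, j, l}" and "i \<noteq> j" "i \<noteq> l" "j \<noteq> l"
    and nonneg: "\<And>m \<omega>. m \<in> {i, j, l} \<Longrightarrow> \<omega> \<in> space M \<Longrightarrow> 0 \<le> Y m \<omega>"
  shows "prob {\<omega>\<in>space M. Y i \<omega> \<le> a} * expectation (\<lambda>\<omega>. Y j \<omega> * indicator {..b} (Y j \<omega>))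
           * prob {\<omega>\<in>space M. Y l \<omega> \<le> c}
         \<le> expectation (\<lambda>\<omega>. Y j \<omega> * indicator {..a + b + c} (Y i \<omega> + Y j \<omega> + Y l \<omega>))"
proof -
  have [measurable]: "Y m \<in> borel_measurable M" if "m \<in> {i, j, l}" for m
    using indep that by (auto simp: indep_vars_def)
  define g :: "'i \<Rightarrow> real \<Rightarrow> real" where
    "g m x = (if m = i then indicator {..a} x else if m = j then x * indicator {..b} x else indicator {..c} x)"
    for m x
  have indep_g: "indep_vars (\<lambda>_. borel) (\<lambda>m \<omega>. g m (Y m \<omega>)) {i, j, l}"
    by (rule indep_vars_compose2[OF indep]) (simp add: g_def)
  have "integrable M (\<lambda>\<omega>. g m (Y m \<omega>))" if m: "m \<in> {i, j, l}" for m
  proof (cases "m = j")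
    case True
    then show ?thesis
      using nonneg \<open>i \<noteq> j\<close>
      by (simp add: g_def integrable_mult_indicator_sublevel finite_measure_axioms)
  next
    case False
    show ?thesis
      by (rule integrable_const_bound[where B = 1]) (use m False in \<open>auto simp: g_def\<close>)
  qed
  then have "expectation (\<lambda>\<omega>. \<Prod>m\<in>{i, j, l}. g m (Y m \<omega>)) = (\<Prod>m\<in>{i, j, l}. expectation (\<lambda>\<omega>. g m (Y m \<omega>)))"
    by (intro indep_vars_lebesgue_integral indep_g) auto
  then have "prob {\<omega>\<in>space M. Y i \<omega> \<le> a} * expectation (\<lambda>\<omega>. Y j \<omega> * indicator {..b} (Y j \<omega>))
           * prob {\<omega>\<in>space M. Y l \<omega> \<le> c}
      = expectation (\<lambda>\<omega>. indicator {..a} (Y i \<omega>) * (Y j \<omega> * indicator {..b} (Y j \<omega>)) * indicator {..c} (Y l \<omega>))"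
    using assms(2-4) by (simp add: g_def expectation_indicator_atMost mult_ac)
  also have "\<dots> \<le> expectation (\<lambda>\<omega>. Y j \<omega> * indicator {..a + b + c} (Y i \<omega> + Y j \<omega> + Y l \<omega>))"
  proof (rule integral_mono')
    show "integrable M (\<lambda>\<omega>. Y j \<omega> * indicator {..a + b + c} (Y i \<omega> + Y j \<omega> + Y l \<omega>))"
      using nonneg by (intro integrable_mult_indicator_sublevel finite_measure_axioms) auto
  qed (use nonneg in \<open>auto simp: indicator_def\<close>)
  finally show ?thesis .
qed

lemma (in prob_space) prob_mult_truncated_expectation_le_sum:
  fixes X :: "'i \<Rightarrow> 'a \<Rightarrow> real"
  assumes indep: "indep_vars (\<lambda>_. borel) X I" and "finite I" and "i \<in> I" "j \<in> I" "i \<noteq> j"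
    and nonneg: "\<And>k \<omega>. k \<in> I \<Longrightarrow> \<omega> \<in> space M \<Longrightarrow> 0 \<le> X k \<omega>"
  shows "prob {\<omega>\<in>space M. X i \<omega> \<le> a} * expectation (\<lambda>\<omega>. X j \<omega> * indicator {..b} (X j \<omega>))
           * prob {\<omega>\<in>space M. a + b \<le> X i \<omega> \<and> (\<Sum>k\<in>I. X k \<omega>) \<le> L}
         \<le> expectation (\<lambda>\<omega>. X j \<omega> * indicator {..L} (\<Sum>k\<in>I. X k \<omega>))"
proof -
  have [measurable]: "X k \<in> borel_measurable M" if "k \<in> I" for k
    using indep that by (auto simp: indep_vars_def)
  define R where "R \<omega> = (\<Sum>k\<in>I - {i, j}. X k \<omega>)" for \<omega>
  have sum_split: "(\<Sum>k\<in>I. X k \<omega>) = X i \<omega> + X j \<omega> + R \<omega>" for \<omega>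
  proof -
    have "(\<Sum>k\<in>I. X k \<omega>) = X i \<omega> + (\<Sum>k\<in>I - {i}. X k \<omega>)"
      using assms(2,3) by (rule sum.remove)
    also have "(\<Sum>k\<in>I - {i}. X k \<omega>) = X j \<omega> + (\<Sum>k\<in>I - {i} - {j}. X k \<omega>)"
      using assms(2,4,5) by (intro sum.remove) auto
    finally show ?thesis
      by (simp add: R_def Diff_insert2[symmetric])
  qed
  define K :: "nat \<Rightarrow> 'i set" where "K m = (if m = 0 then {i} else if m = 1 then {j} else I - {i, j})" for m
  define Y where "Y m \<omega> = (\<Sum>k\<in>K m. X k \<omega>)" for m \<omega>
  have indep_Y: "indep_vars (\<lambda>_. borel) Y {0, 1, 2}"
    unfolding Y_def
    by (rule indep_vars_sum_blocks[OF indep]) (use assms(3-5) in \<open>auto simp: K_def disjoint_family_on_def\<close>)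
  have Y_nonneg: "0 \<le> Y m \<omega>" if "m \<in> {0, 1, 2}" "\<omega> \<in> space M" for m \<omega>
    using assms(3,4) that by (auto simp: Y_def K_def intro!: sum_nonneg nonneg)
  have "Y 0 = X i" "Y 1 = X j" "Y 2 = R"
    by (auto simp: Y_def K_def R_def fun_eq_iff)
  with prob_mult_truncated_expectation_le[OF indep_Y _ _ _ Y_nonneg, of a b "L - a - b"]
  have "prob {\<omega>\<in>space M. X i \<omega> \<le> a} * expectation (\<lambda>\<omega>. X j \<omega> * indicator {..b} (X j \<omega>))
           * prob {\<omega>\<in>space M. R \<omega> \<le> L - a - b}
         \<le> expectation (\<lambda>\<omega>. X j \<omega> * indicator {..L} (\<Sum>k\<in>I. X k \<omega>))"
    by (simp add: sum_split)
  moreover have "prob {\<omega>\<in>space M. a + b \<le> X i \<omega> \<and> (\<Sum>k\<in>I. X k \<omega>) \<le> L} \<le> prob {\<omega>\<in>space M. R \<omega> \<le> L - a - b}"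
    using nonneg[OF assms(4)] by (intro finite_measure_mono) (force simp: sum_split R_def)+
  moreover have "0 \<le> expectation (\<lambda>\<omega>. X j \<omega> * indicator {..b} (X j \<omega>))"
    using nonneg[OF assms(4)] by (intro integral_nonneg_AE AE_I2) simp
  ultimately show ?thesis
    by (meson measure_nonneg mult_left_mono mult_nonneg_nonneg order_trans)
qed

lemma (in prob_space) sum_expectation_mult_indicator_le:
  fixes X :: "'i \<Rightarrow> 'a \<Rightarrow> real"
  assumes [measurable]: "\<And>k. k \<in> I \<Longrightarrow> X k \<in> borel_measurable M"
    and "finite I" "J \<subseteq> I" and nonneg: "\<And>k \<omega>. k \<in> I \<Longrightarrow> \<omega> \<in> space M \<Longrightarrow> 0 \<le> X k \<omega>"
  shows "(\<Sum>j\<in>J. expectation (\<lambda>\<omega>. X j \<omega> * indicator {..L} (\<Sum>k\<in>I. X k \<omega>)))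
         \<le> L * prob {\<omega>\<in>space M. (\<Sum>k\<in>I. X k \<omega>) \<le> L}"
proof -
  have [measurable]: "(\<lambda>\<omega>. \<Sum>j\<in>J. X j \<omega>) \<in> borel_measurable M"
    using assms(3) by (intro borel_measurable_sum) auto
  have part_le_sum: "0 \<le> (\<Sum>j\<in>J. X j \<omega>) \<and> (\<Sum>j\<in>J. X j \<omega>) \<le> (\<Sum>k\<in>I. X k \<omega>)"
    if "\<omega> \<in> space M" for \<omega>
    using assms(2,3) nonneg[OF _ that] by (auto intro: sum_nonneg sum_mono2)
  have "(\<Sum>j\<in>J. expectation (\<lambda>\<omega>. X j \<omega> * indicator {..L} (\<Sum>k\<in>I. X k \<omega>)))
      = expectation (\<lambda>\<omega>. (\<Sum>j\<in>J. X j \<omega>) * indicator {..L} (\<Sum>k\<in>I. X k \<omega>))"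
    using assms(2,3) nonneg
    by (subst Bochner_Integration.integral_sum[symmetric])
       (auto simp: sum_distrib_right intro!: integrable_mult_indicator_sublevel finite_measure_axioms
         member_le_sum)
  also have "\<dots> \<le> expectation (\<lambda>\<omega>. L * indicator {..L} (\<Sum>k\<in>I. X k \<omega>))"
  proof (rule integral_mono)
    show "integrable M (\<lambda>\<omega>. (\<Sum>j\<in>J. X j \<omega>) * indicator {..L} (\<Sum>k\<in>I. X k \<omega>))"
      using part_le_sum by (intro integrable_mult_indicator_sublevel finite_measure_axioms) auto
    show "integrable M (\<lambda>\<omega>. L * indicator {..L} (\<Sum>k\<in>I. X k \<omega>))"
      by (rule integrable_const_bound[where B = "\<bar>L\<bar>"]) (auto simp: indicator_def)
  qed (use part_le_sum in \<open>force simp: indicator_def\<close>)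
  also have "\<dots> = L * prob {\<omega>\<in>space M. (\<Sum>k\<in>I. X k \<omega>) \<le> L}"
    by (simp add: expectation_indicator_atMost)
  finally show ?thesis .
qed

theorem lemma3p2:
  fixes M :: "'a measure" and X :: "nat \<Rightarrow> 'a \<Rightarrow> real" and n :: nat
    and L \<delta> \<delta>' :: real
  assumes "prob_space M"
    and "n \<ge> 1"
    and "prob_space.indep_vars M (\<lambda>_. borel) X {1..n}"
    and "\<And>k \<omega>. k \<in> {1..n} \<Longrightarrow> \<omega> \<in> space M \<Longrightarrow> X k \<omega> \<ge> 0"
    and "L \<ge> 0"
    and "\<P>(\<omega> in M. (\<Sum>k=1..n. X k \<omega>) \<le> L) > 0"
    and "0 < \<delta>'" and "\<delta>' \<le> \<delta>"
    and "\<P>(\<omega> in M. X 1 \<omega> \<le> \<delta> - \<delta>')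
         * (\<Sum>k=2..n. prob_space.expectation M (\<lambda>\<omega>. X k \<omega> * indicator {x. x \<le> \<delta>'} (X k \<omega>))) > 0"
  shows "\<P>(\<omega> in M. X 1 \<omega> \<ge> \<delta> \<bar> (\<Sum>k=1..n. X k \<omega>) \<le> L)
         \<le> L / (\<P>(\<omega> in M. X 1 \<omega> \<le> \<delta> - \<delta>')
         * (\<Sum>k=2..n. prob_space.expectation M (\<lambda>\<omega>. X k \<omega> * indicator {x. x \<le> \<delta>'} (X k \<omega>))))"
proof -
  interpret prob_space M by fact
  define S where "S \<omega> = (\<Sum>k=1..n. X k \<omega>)" for \<omega>
  define p where "p = \<P>(\<omega> in M. X 1 \<omega> \<le> \<delta> - \<delta>')"
  define E where "E k = expectation (\<lambda>\<omega>. X k \<omega> * indicator {..\<delta>'} (X k \<omega>))" for k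
  define q where "q = \<P>(\<omega> in M. \<delta> \<le> X 1 \<omega> \<and> S \<omega> \<le> L)"
  have X_measurable: "X k \<in> borel_measurable M" if "k \<in> {1..n}" for k
    using assms(3) that by (auto simp: indep_vars_def)
  have per_index: "p * E k * q \<le> expectation (\<lambda>\<omega>. X k \<omega> * indicator {..L} (S \<omega>))"
    if "k \<in> {2..n}" for k
    using prob_mult_truncated_expectation_le_sum[OF assms(3) _ _ _ _ assms(4), of 1 k "\<delta> - \<delta>'" "\<delta>'" L]
      that assms(2)
    by (simp add: p_def E_def q_def S_def)
  have "q * (p * (\<Sum>k=2..n. E k)) = (\<Sum>k=2..n. p * E k * q)"
    by (simp add: sum_distrib_left sum_distrib_right mult_ac)
  also have "\<dots> \<le> (\<Sum>k=2..n. expectation (\<lambda>\<omega>. X k \<omega> * indicator {..L} (S \<omega>)))"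
    using per_index by (rule sum_mono)
  also have "\<dots> \<le> L * \<P>(\<omega> in M. S \<omega> \<le> L)"
    unfolding S_def using assms(4) X_measurable by (intro sum_expectation_mult_indicator_le) auto
  finally have "q * (p * (\<Sum>k=2..n. E k)) \<le> L * \<P>(\<omega> in M. S \<omega> \<le> L)" .
  moreover have "p * (\<Sum>k=2..n. E k) > 0" "\<P>(\<omega> in M. S \<omega> \<le> L) > 0"
    using assms(6,9) by (simp_all add: p_def E_def S_def atMost_def)
  ultimately show ?thesis
    by (simp add: cond_prob_def q_def p_def E_def S_def atMost_def field_simps)
qed

end
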